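(* Let $T$ be a balanced eulerian tree and let $T'$ be its balanced conjugate (the eulerian tree obtained from $T$ by re-rooting it at the other free leaf). Then the closure $\sigma(T')$ is the map obtained from the closure $\sigma(T)$ by reversing the orientation of its root edge.
   Context: A plane tree is a planar map (embedding of a finite connected graph in the sphere up to orientation-preserving homeomorphism) with one face; vertices of degree 1 are leaves, others inner vertices. An eulerian tree is a plane tree rooted at a leaf, whose leaves are coloured black or white, such that every inner vertex has even degree, every inner vertex of degree $2i$ is adjacent to exactly $i-1$ white leaves, and the root leaf is black; such a tree has exactly two more black leaves than white leaves. Two eulerian trees are conjugate if one is obtained from the other by changing which black leaf is the root. The word $\omega(T)$ of an eulerian tree $T$ is the word over $\{b,w\}$ obtained by following the border of the tree counterclockwise, ending at the root leaf, writing $b$ for each black leaf and $w$ for each white leaf. Reading $w$ as an opening and $b$ as a closing bracket, a word is correct if in every prefix the number of $w$'s is at least the number of $b$'s; in a correct word each $w$ is matched with a $b$, which induces a matching between leaves. In each conjugacy class there are exactly two rooted trees with $\omega(T)=p_1bp_2b$ where $p_1,p_2$ are correct bracketing words; the corresponding two root leaves are called the free leaves, and a tree is balanced if it is rooted at a free leaf. The closure $\sigma(T)$ of a balanced eulerian tree $T$ is obtained by: (1) going counterclockwise around the tree, merging each white leaf with the black leaf it is matched to in the bracketing word (forming an edge); (2) merging the two free leaves into an edge, and rooting the resulting map on this edge oriented from (the side of) the root leaf. *)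

theory Defs
  imports Main "HOL-Combinatorics.Permutations"
begin

text \<open>Combinatorial maps: a finite set of darts D, a fixed-point-free involution
  \<alpha> (the two darts of an edge), and a permutation \<sigma> (counterclockwise
  rotation of darts around their vertex).\<close>

datatype colour = Black | White

definition orbit_of :: "('a \<Rightarrow> 'a) \<Rightarrow> 'a \<Rightarrow> 'a set" where
  "orbit_of f d = {(f ^^ n) d | n. True}"

definition comb_map :: "'a set \<Rightarrow> ('a \<Rightarrow> 'a) \<Rightarrow> ('a \<Rightarrow> 'a) \<Rightarrow> bool" where
  "comb_map D \<alpha> \<sigma> \<longleftrightarrow> finite D \<and> D \<noteq> {} \<and> \<alpha> permutes D \<and> \<sigma> permutes D
     \<and> (\<forall>d\<in>D. \<alpha> (\<alpha> d) = d \<and> \<alpha> d \<noteq> d)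
     \<and> (\<forall>d\<in>D. \<forall>e\<in>D. (d, e) \<in> ({(x, \<alpha> x) | x. x \<in> D} \<union> {(x, \<sigma> x) | x. x \<in> D})\<^sup>*)"

definition map_vertices :: "'a set \<Rightarrow> ('a \<Rightarrow> 'a) \<Rightarrow> 'a set set" where
  "map_vertices D \<sigma> = {orbit_of \<sigma> d | d. d \<in> D}"

definition map_edges :: "'a set \<Rightarrow> ('a \<Rightarrow> 'a) \<Rightarrow> 'a set set" where
  "map_edges D \<alpha> = {{d, \<alpha> d} | d. d \<in> D}"

definition map_faces :: "'a set \<Rightarrow> ('a \<Rightarrow> 'a) \<Rightarrow> ('a \<Rightarrow> 'a) \<Rightarrow> 'a set set" where
  "map_faces D \<alpha> \<sigma> = {orbit_of (\<sigma> \<circ> \<alpha>) d | d. d \<in> D}"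

definition planar_map :: "'a set \<Rightarrow> ('a \<Rightarrow> 'a) \<Rightarrow> ('a \<Rightarrow> 'a) \<Rightarrow> bool" where
  "planar_map D \<alpha> \<sigma> \<longleftrightarrow> comb_map D \<alpha> \<sigma> \<and>
     int (card (map_vertices D \<sigma>)) - int (card (map_edges D \<alpha>)) + int (card (map_faces D \<alpha> \<sigma>)) = 2"

definition plane_tree :: "'a set \<Rightarrow> ('a \<Rightarrow> 'a) \<Rightarrow> ('a \<Rightarrow> 'a) \<Rightarrow> bool" where
  "plane_tree D \<alpha> \<sigma> \<longleftrightarrow> planar_map D \<alpha> \<sigma> \<and> card (map_faces D \<alpha> \<sigma>) = 1"

text \<open>A leaf (vertex of degree 1) is a single dart d with \<sigma> d = d; the degree
  of the vertex of a dart d is the size of its \<sigma>-orbit. A leaf l is adjacent to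
  the vertex of d iff \<alpha> l lies in that vertex. A tree is represented together
  with its colouring col (only relevant on leaves) and its root leaf r.\<close>
definition eulerian_tree ::
  "'a set \<Rightarrow> ('a \<Rightarrow> 'a) \<Rightarrow> ('a \<Rightarrow> 'a) \<Rightarrow> ('a \<Rightarrow> colour) \<Rightarrow> 'a \<Rightarrow> bool" where
  "eulerian_tree D \<alpha> \<sigma> col r \<longleftrightarrow> plane_tree D \<alpha> \<sigma> \<and> r \<in> D \<and> \<sigma> r = r \<and> col r = Black \<and>
     (\<forall>d\<in>D. \<sigma> d \<noteq> d \<longrightarrow>
        even (card (orbit_of \<sigma> d)) \<and>
        card {l \<in> D. \<sigma> l = l \<and> col l = White \<and> \<alpha> l \<in> orbit_of \<sigma> d}
          = card (orbit_of \<sigma> d) div 2 - 1)"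

text \<open>Leaves in the order met when following the border counterclockwise
  (face permutation \<sigma> \<circ> \<alpha>), starting after the root and ending at the root.\<close>
definition leaf_seq :: "'a set \<Rightarrow> ('a \<Rightarrow> 'a) \<Rightarrow> ('a \<Rightarrow> 'a) \<Rightarrow> 'a \<Rightarrow> 'a list" where
  "leaf_seq D \<alpha> \<sigma> r =
     filter (\<lambda>d. \<sigma> d = d) (map (\<lambda>k. ((\<sigma> \<circ> \<alpha>) ^^ k) r) [1..<Suc (card D)])"

text \<open>The word \<omega>(T); letter b is Black, letter w is White.\<close>
definition tree_word ::
  "'a set \<Rightarrow> ('a \<Rightarrow> 'a) \<Rightarrow> ('a \<Rightarrow> 'a) \<Rightarrow> ('a \<Rightarrow> colour) \<Rightarrow> 'a \<Rightarrow> colour list" where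
  "tree_word D \<alpha> \<sigma> col r = map col (leaf_seq D \<alpha> \<sigma> r)"

text \<open>Correct word: w = opening, b = closing; every prefix has at least as many w as b.\<close>
definition correct_word :: "colour list \<Rightarrow> bool" where
  "correct_word u \<longleftrightarrow>
     (\<forall>k \<le> length u. count_list (take k u) Black \<le> count_list (take k u) White)"

definition balanced_tree ::
  "'a set \<Rightarrow> ('a \<Rightarrow> 'a) \<Rightarrow> ('a \<Rightarrow> 'a) \<Rightarrow> ('a \<Rightarrow> colour) \<Rightarrow> 'a \<Rightarrow> bool" where
  "balanced_tree D \<alpha> \<sigma> col r \<longleftrightarrow> eulerian_tree D \<alpha> \<sigma> col r \<and>
     (\<exists>p1 p2. correct_word p1 \<and> correct_word p2 \<and>
        tree_word D \<alpha> \<sigma> col r = p1 @ [Black] @ p2 @ [Black])"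

definition brackets_matched :: "colour list \<Rightarrow> nat \<Rightarrow> nat \<Rightarrow> bool" where
  "brackets_matched u i j \<longleftrightarrow> i < j \<and> j < length u \<and> u ! i = White \<and> u ! j = Black \<and>
     (let v = take (j - Suc i) (drop (Suc i) u) in
        correct_word v \<and> count_list v White = count_list v Black)"

definition leaves_matched ::
  "'a set \<Rightarrow> ('a \<Rightarrow> 'a) \<Rightarrow> ('a \<Rightarrow> 'a) \<Rightarrow> ('a \<Rightarrow> colour) \<Rightarrow> 'a \<Rightarrow> 'a \<Rightarrow> 'a \<Rightarrow> bool" where
  "leaves_matched D \<alpha> \<sigma> col r a b \<longleftrightarrow>
     (let L = leaf_seq D \<alpha> \<sigma> r in
        \<exists>i j. brackets_matched (map col L) i j \<and> L ! i = a \<and> L ! j = b)"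

text \<open>The leaf a leaf l gets merged with in the closure: its matched leaf, or,
  for a free leaf, the other free leaf (free leaves = roots of balanced rootings).\<close>
definition closure_mate ::
  "'a set \<Rightarrow> ('a \<Rightarrow> 'a) \<Rightarrow> ('a \<Rightarrow> 'a) \<Rightarrow> ('a \<Rightarrow> colour) \<Rightarrow> 'a \<Rightarrow> 'a \<Rightarrow> 'a" where
  "closure_mate D \<alpha> \<sigma> col r l =
     (if \<exists>l'. leaves_matched D \<alpha> \<sigma> col r l l' \<or> leaves_matched D \<alpha> \<sigma> col r l' l
      then (THE l'. leaves_matched D \<alpha> \<sigma> col r l l' \<or> leaves_matched D \<alpha> \<sigma> col r l' l)
      else (THE l'. l' \<noteq> l \<and> balanced_tree D \<alpha> \<sigma> col l'))"

text \<open>Closure as a rooted map (darts, \<alpha>, \<sigma>, root dart). Leaf darts are removed;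
  a dart d whose edge ends at a leaf l = \<alpha> d is joined to the dart \<alpha> l' of the
  leaf l' merged with l. The root dart is the dart of the merged free-leaf edge
  lying on the side of the root leaf r, namely \<alpha> r (its origin is the root vertex).\<close>
definition eul_closure ::
  "'a set \<Rightarrow> ('a \<Rightarrow> 'a) \<Rightarrow> ('a \<Rightarrow> 'a) \<Rightarrow> ('a \<Rightarrow> colour) \<Rightarrow> 'a
     \<Rightarrow> 'a set \<times> ('a \<Rightarrow> 'a) \<times> ('a \<Rightarrow> 'a) \<times> 'a" where
  "eul_closure D \<alpha> \<sigma> col r =
     ({d \<in> D. \<sigma> d \<noteq> d},
      (\<lambda>d. if d \<in> D \<and> \<sigma> d \<noteq> d \<and> \<sigma> (\<alpha> d) = \<alpha> d
           then \<alpha> (closure_mate D \<alpha> \<sigma> col r (\<alpha> d)) else \<alpha> d),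
      \<sigma>,
      \<alpha> r)"

definition reverse_root ::
  "'a set \<times> ('a \<Rightarrow> 'a) \<times> ('a \<Rightarrow> 'a) \<times> 'a \<Rightarrow> 'a set \<times> ('a \<Rightarrow> 'a) \<times> ('a \<Rightarrow> 'a) \<times> 'a" where
  "reverse_root M = (case M of (D, a, s, \<rho>) \<Rightarrow> (D, a, s, a \<rho>))"

end

theory Submission
  imports Defs "HOL-Combinatorics.Orbits"
begin

text \<open>
  Give w height +1 and b height -1. Unless the tree is a single edge, Euler's formula and the
  degree condition give #leaves = 2 #white + 2, so the word of T has height -2. Rerooting at
  another leaf rotates the word cyclically, and a rotation of p1 b p2 b (with p1, p2 correct)
  has this shape again only when it is cut right after the first b. So the other free leaf is
  the last letter of p1 b and the word of T' is p2 b p1 b. No matching crosses a closed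
  block p b with p correct, hence both rootings merge the same pairs of leaves; the root leaf
  r is the only unmatched leaf besides r', and is merged with it. So the two closures differ
  only in their root darts, \<alpha> r and \<alpha> r', which form the merged root edge.
\<close>

section \<open>Bracket words\<close>

definition word_height :: "colour list \<Rightarrow> int" where
  "word_height u = int (count_list u White) - int (count_list u Black)"

lemma word_height_simps [simp]:
  "word_height [] = 0" "word_height (u @ v) = word_height u + word_height v"
  "word_height (Black # u) = word_height u - 1" "word_height (White # u) = word_height u + 1"
  by (simp_all add: word_height_def)

lemma count_list_colours: "count_list u Black + count_list u White = length u"
proof (induct u)
  case (Cons a u)
  then show ?case by (cases a) simp_all
qed simp

lemma count_list_map_distinct:
  "distinct L \<Longrightarrow> count_list (map f L) c = card {x \<in> set L. f x = c}"
  by (simp add: count_list_eq_length_filter filter_map comp_def eq_commute distinct_card[symmetric])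

lemma correct_word_height_take: "correct_word u \<Longrightarrow> 0 \<le> word_height (take k u)"
  unfolding correct_word_def word_height_def by (metis nat_le_linear of_nat_le_iff take_all diff_ge_0_iff_ge)

lemma correct_word_height: "correct_word u \<Longrightarrow> 0 \<le> word_height u"
  using correct_word_height_take[of u "length u"] by simp

lemma balanced_word_factor_heights:
  assumes "correct_word p1" "correct_word p2"
    and "word_height (p1 @ [Black] @ p2 @ [Black]) = -2"
  shows "word_height p1 = 0" "word_height p2 = 0"
  using assms correct_word_height[OF assms(1)] correct_word_height[OF assms(2)] by auto

lemma balanced_word_take_height_ge:
  assumes "correct_word p1" "correct_word p2" "word_height p1 = 0"
    and "k < length (p1 @ [Black] @ p2 @ [Black])"
  shows "-1 \<le> word_height (take k (p1 @ [Black] @ p2 @ [Black]))"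
proof (cases "k \<le> length p1")
  case True
  then show ?thesis using correct_word_height_take[OF assms(1), of k] by simp
next
  case False
  then have "take k (p1 @ [Black] @ p2 @ [Black]) = p1 @ [Black] @ take (k - Suc (length p1)) p2"
    using assms(4) by (simp add: take_Cons')
  then show ?thesis
    using assms(3) correct_word_height_take[OF assms(2), of "k - Suc (length p1)"] by simp
qed

text \<open>Every proper prefix of b @ a has height at least -1. Cutting p1 b p2 b inside p1 makes the
  prefix b of height at most -2; cutting it inside p2 b makes the prefix b @ p1 b too low.\<close>
lemma balanced_word_rotation:
  assumes ab: "a @ b = p1 @ [Black] @ p2 @ [Black]"
    and ba: "b @ a = q1 @ [Black] @ q2 @ [Black]"
    and p: "correct_word p1" "correct_word p2" and q: "correct_word q1" "correct_word q2"
    and height: "word_height (a @ b) = -2" and "a \<noteq> []" "b \<noteq> []"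
  shows "a = p1 @ [Black] \<and> b = p2 @ [Black]"
proof -
  have "word_height p1 = 0"
    using balanced_word_factor_heights(1)[OF p] height unfolding ab .
  have "word_height (q1 @ [Black] @ q2 @ [Black]) = -2" unfolding ba[symmetric] using height by simp
  then have "word_height q1 = 0" by (rule balanced_word_factor_heights(1)[OF q])
  have prefix_ba: "-1 \<le> word_height (take k (b @ a))" if "k < length (b @ a)" for k
    using balanced_word_take_height_ge[OF q \<open>word_height q1 = 0\<close>] that unfolding ba by blast
  have height_b: "word_height b = -2 - word_height a" using height by simp
  have "length a = Suc (length p1)"
  proof (rule linorder_cases)
    assume short: "length a < Suc (length p1)"
    have "a = take (length a) (a @ b)" by simp
    also have "\<dots> = take (length a) p1" using short unfolding ab by simp
    finally have "0 \<le> word_height a" using correct_word_height_take[OF p(1)] by metis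
    moreover have "-1 \<le> word_height b" using prefix_ba[of "length b"] \<open>a \<noteq> []\<close> by simp
    ultimately show ?thesis using height_b by simp
  next
    assume long: "Suc (length p1) < length a"
    define m where "m = length a - Suc (length p1)"
    have "0 < length b" using \<open>b \<noteq> []\<close> by simp
    moreover have "length a + length b = length p1 + length p2 + 2"
      using arg_cong[OF ab, of length] by simp
    ultimately have "m \<le> length p2" unfolding m_def by linarith
    have "a = take (length a) (a @ b)" by simp
    also have "\<dots> = p1 @ [Black] @ take m p2"
      using long \<open>m \<le> length p2\<close> unfolding ab m_def by (simp add: take_Cons')
    finally have a: "a = p1 @ [Black] @ take m p2" .
    then have "-1 \<le> word_height a"
      using correct_word_height_take[OF p(2), of m] \<open>word_height p1 = 0\<close> by simp
    have "take (length b + Suc (length p1)) (b @ a) = b @ p1 @ [Black]"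
      by (subst a) simp
    moreover have "length b + Suc (length p1) < length (b @ a)" using long by simp
    ultimately have "-1 \<le> word_height (b @ p1 @ [Black])" using prefix_ba by metis
    then show ?thesis using height_b \<open>-1 \<le> word_height a\<close> \<open>word_height p1 = 0\<close> by simp
  qed
  then show ?thesis using ab append_eq_append_conv[of a "p1 @ [Black]" b "p2 @ [Black]"] by simp
qed

lemma brackets_matched_less: "brackets_matched u i j \<Longrightarrow> i < j \<and> j < length u"
  unfolding brackets_matched_def by simp

lemma brackets_matched_append_right:
  assumes "j < length u"
  shows "brackets_matched (u @ v) i j \<longleftrightarrow> brackets_matched u i j"
proof -
  have "take (j - Suc i) (drop (Suc i) (u @ v)) = take (j - Suc i) (drop (Suc i) u)" if "i < j"
    using assms that by (simp add: take_append)
  then show ?thesis using assms unfolding brackets_matched_def by (auto simp: nth_append Let_def)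
qed

lemma brackets_matched_append_left:
  "brackets_matched (v @ u) (length v + i) (length v + j) \<longleftrightarrow> brackets_matched u i j"
  unfolding brackets_matched_def by (auto simp: nth_append Let_def)

lemma not_brackets_matched_across:
  assumes x: "correct_word x" "word_height x = 0" and "i < length x" "length x \<le> j"
  shows "\<not> brackets_matched (x @ z) i j"
proof
  assume matched: "brackets_matched (x @ z) i j"
  define v where "v = take (j - Suc i) (drop (Suc i) (x @ z))"
  have "x ! i = White" using matched \<open>i < length x\<close> unfolding brackets_matched_def by (simp add: nth_append)
  have "correct_word v" using matched unfolding brackets_matched_def v_def Let_def by blast
  moreover have "take (length x - Suc i) v = drop (Suc i) x"
    unfolding v_def using assms(3,4) by (simp add: min_def)
  ultimately have "0 \<le> word_height (drop (Suc i) x)" using correct_word_height_take by metis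
  moreover have "x = take i x @ White # drop (Suc i) x"
    using \<open>i < length x\<close> \<open>x ! i = White\<close> by (metis id_take_nth_drop)
  then have "word_height x = word_height (take i x @ White # drop (Suc i) x)"
    by (rule arg_cong)
  then have "word_height x = word_height (take i x) + 1 + word_height (drop (Suc i) x)"
    by simp
  moreover have "0 \<le> word_height (take i x)" using correct_word_height_take[OF x(1)] .
  ultimately show False using x(2) by simp
qed

lemma brackets_matched_closed_append_iff:
  assumes x: "correct_word x" "word_height x = 0"
  shows "brackets_matched ((x @ [Black]) @ v) i j \<longleftrightarrow>
    brackets_matched (x @ [Black]) i j \<or>
    (length x < i \<and> brackets_matched v (i - Suc (length x)) (j - Suc (length x)))"
proof (cases "length x < i")
  case True
  show ?thesis
  proof (cases "i < j")
    case True
    then have "i = length (x @ [Black]) + (i - Suc (length x))"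
      "j = length (x @ [Black]) + (j - Suc (length x))" using \<open>length x < i\<close> by simp_all
    then show ?thesis
      using brackets_matched_append_left[of "x @ [Black]" v "i - Suc (length x)" "j - Suc (length x)"]
        brackets_matched_less[of "x @ [Black]" i j] \<open>length x < i\<close> by auto
  next
    case False
    then show ?thesis using brackets_matched_less by (metis diff_le_mono not_le)
  qed
next
  case False
  then consider "i < length x" | "i = length x" by linarith
  then show ?thesis
  proof cases
    case 1
    show ?thesis
    proof (cases "j < length x")
      case True
      then show ?thesis
        using brackets_matched_append_right[of j "x @ [Black]" v] \<open>\<not> length x < i\<close> by simp
    next
      case False
      then show ?thesis
        using not_brackets_matched_across[OF x 1, of j "[Black] @ v"]
          not_brackets_matched_across[OF x 1, of j "[Black]"] \<open>\<not> length x < i\<close> by simp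
    qed
  next
    case 2
    then show ?thesis unfolding brackets_matched_def by (simp add: nth_append)
  qed
qed

lemma closed_block_last_unmatched:
  assumes "correct_word x" "word_height x = 0" "brackets_matched (x @ [Black]) i j"
  shows "j < length x"
proof (rule ccontr)
  assume "\<not> j < length x"
  moreover have "i < length x" using brackets_matched_less[OF assms(3)] by simp
  ultimately show False using not_brackets_matched_across[OF assms(1,2)] assms(3) by simp
qed

definition list_matched :: "('a \<Rightarrow> colour) \<Rightarrow> 'a list \<Rightarrow> 'a \<Rightarrow> 'a \<Rightarrow> bool" where
  "list_matched col L a b \<longleftrightarrow> (\<exists>i j. brackets_matched (map col L) i j \<and> L ! i = a \<and> L ! j = b)"

lemma leaves_matched_eq_list_matched:
  "leaves_matched D \<alpha> \<sigma> col r = list_matched col (leaf_seq D \<alpha> \<sigma> r)"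
  by (simp add: fun_eq_iff leaves_matched_def list_matched_def Let_def)

lemma list_matched_closed_append:
  assumes A: "map col A = x @ [Black]" and x: "correct_word x" "word_height x = 0"
  shows "list_matched col (A @ B) l l' \<longleftrightarrow> list_matched col A l l' \<or> list_matched col B l l'"
proof -
  have len: "length A = Suc (length x)" using arg_cong[OF A, of length] by simp
  have split: "brackets_matched (map col (A @ B)) i j \<longleftrightarrow>
      brackets_matched (map col A) i j \<or>
      (length A \<le> i \<and> brackets_matched (map col B) (i - length A) (j - length A))" for i j
    using brackets_matched_closed_append_iff[OF x, of "map col B" i j] A len by auto
  have in_A: "(A @ B) ! i = A ! i \<and> (A @ B) ! j = A ! j" if "brackets_matched (map col A) i j" for i j
    using brackets_matched_less[OF that] by (simp add: nth_append)
  have in_B: "(A @ B) ! i = B ! (i - length A) \<and> (A @ B) ! j = B ! (j - length A)"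
    if "length A \<le> i" "brackets_matched (map col B) (i - length A) (j - length A)" for i j
    using brackets_matched_less[OF that(2)] that(1) by (auto simp: nth_append)
  show ?thesis
  proof
    assume "list_matched col (A @ B) l l'"
    then obtain i j where m: "brackets_matched (map col (A @ B)) i j" "(A @ B) ! i = l" "(A @ B) ! j = l'"
      unfolding list_matched_def by blast
    then show "list_matched col A l l' \<or> list_matched col B l l'"
      unfolding list_matched_def split using in_A in_B by metis
  next
    assume "list_matched col A l l' \<or> list_matched col B l l'"
    then show "list_matched col (A @ B) l l'"
    proof
      assume "list_matched col A l l'"
      then show ?thesis unfolding list_matched_def split using in_A by metis
    next
      assume "list_matched col B l l'"
      then obtain i j where m: "brackets_matched (map col B) i j" "B ! i = l" "B ! j = l'"
        unfolding list_matched_def by blast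
      then have "brackets_matched (map col (A @ B)) (length A + i) (length A + j)"
        unfolding split by simp
      moreover have "(A @ B) ! (length A + i) = l" "(A @ B) ! (length A + j) = l'"
        using m by simp_all
      ultimately show ?thesis unfolding list_matched_def by blast
    qed
  qed
qed

lemma list_matched_closed_in_butlast:
  assumes A: "map col A = x @ [Black]" and x: "correct_word x" "word_height x = 0"
    and "list_matched col A l l'"
  shows "l \<in> set (butlast A) \<and> l' \<in> set (butlast A)"
proof -
  obtain i j where m: "brackets_matched (map col A) i j" "A ! i = l" "A ! j = l'"
    using assms(4) unfolding list_matched_def by blast
  have "j < length x" using closed_block_last_unmatched[OF x] m(1) A by simp
  moreover have "length (butlast A) = length x" using arg_cong[OF A, of length] by simp
  ultimately show ?thesis using m brackets_matched_less[OF m(1)]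
    by (metis nth_butlast nth_mem order.strict_trans)
qed

section \<open>Plane trees as combinatorial maps\<close>

locale plane_tree_map =
  fixes D :: "'a set" and \<alpha> \<sigma> :: "'a \<Rightarrow> 'a"
  assumes plane_tree: "plane_tree D \<alpha> \<sigma>"
begin

lemma finite_darts: "finite D"
  and alpha_permutes: "\<alpha> permutes D" and sigma_permutes: "\<sigma> permutes D"
  and alpha_alpha: "d \<in> D \<Longrightarrow> \<alpha> (\<alpha> d) = d" and alpha_neq: "d \<in> D \<Longrightarrow> \<alpha> d \<noteq> d"
  and card_map_faces: "card (map_faces D \<alpha> \<sigma>) = 1"
  and euler: "int (card (map_vertices D \<sigma>)) - int (card (map_edges D \<alpha>)) + int (card (map_faces D \<alpha> \<sigma>)) = 2"
  using plane_tree unfolding plane_tree_def planar_map_def comb_map_def by auto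

lemma alpha_in: "d \<in> D \<Longrightarrow> \<alpha> d \<in> D"
  using alpha_permutes by (simp add: permutes_in_image)

lemma permutation_sigma: "permutation \<sigma>"
  using sigma_permutes finite_darts permutation_permutes by blast

lemma orbit_of_sigma: "orbit_of \<sigma> d = orbit \<sigma> d"
  by (simp add: orbit_of_def orbit_altdef_permutation[OF permutation_sigma])

definition \<phi> :: "'a \<Rightarrow> 'a" where "\<phi> = \<sigma> \<circ> \<alpha>"

lemma phi_permutes: "\<phi> permutes D"
  unfolding \<phi>_def using permutes_compose[OF alpha_permutes sigma_permutes] .

lemma permutation_phi: "permutation \<phi>"
  using phi_permutes finite_darts permutation_permutes by blast

lemma orbit_phi: assumes "d \<in> D" shows "orbit \<phi> d = D"
proof -
  have faces: "map_faces D \<alpha> \<sigma> = {orbit \<phi> e | e. e \<in> D}"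
    unfolding map_faces_def \<phi>_def[symmetric] orbit_of_def
    using orbit_altdef_permutation[OF permutation_phi] by simp
  obtain F where F: "map_faces D \<alpha> \<sigma> = {F}" using card_map_faces by (meson card_1_singletonE)
  have "orbit \<phi> e \<in> map_faces D \<alpha> \<sigma>" if "e \<in> D" for e unfolding faces using that by blast
  then have "orbit \<phi> e = orbit \<phi> d" if "e \<in> D" for e using F that assms by blast
  then have "D \<subseteq> orbit \<phi> d" using permutation_self_in_orbit[OF permutation_phi] by blast
  then show ?thesis using permutes_orbit_subset[OF phi_permutes assms] by blast
qed

lemma face_cycle:
  assumes "d \<in> D"
  shows "(\<phi> ^^ card D) d = d" "inj_on (\<lambda>k. (\<phi> ^^ k) d) {0..<card D}"
    "(\<lambda>k. (\<phi> ^^ k) d) ` {0..<card D} = D"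
proof -
  have self: "d \<in> orbit \<phi> d" using permutation_self_in_orbit[OF permutation_phi] .
  have orbit: "orbit \<phi> d = (\<lambda>n. (\<phi> ^^ n) d) ` {0..<funpow_dist1 \<phi> d d}"
    by (rule orbit_conv_funpow_dist1[OF self])
  have inj: "inj_on (\<lambda>n. (\<phi> ^^ n) d) {0..<funpow_dist1 \<phi> d d}"
    by (rule inj_on_funpow_dist1[OF self])
  have "card D = funpow_dist1 \<phi> d d"
    using orbit_phi[OF assms] orbit card_image[OF inj] by simp
  then show "(\<phi> ^^ card D) d = d" "inj_on (\<lambda>k. (\<phi> ^^ k) d) {0..<card D}"
    "(\<lambda>k. (\<phi> ^^ k) d) ` {0..<card D} = D"
    using funpow_dist1_prop[OF self] inj orbit orbit_phi[OF assms] by auto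
qed

lemma card_darts_pos: "r \<in> D \<Longrightarrow> 0 < card D"
  using finite_darts card_gt_0_iff by blast

definition border_seq :: "'a \<Rightarrow> 'a list" where
  "border_seq r = map (\<lambda>k. (\<phi> ^^ k) r) [1..<Suc (card D)]"

lemma leaf_seq_border_seq: "leaf_seq D \<alpha> \<sigma> r = filter (\<lambda>d. \<sigma> d = d) (border_seq r)"
  unfolding leaf_seq_def border_seq_def \<phi>_def by simp

lemma length_border_seq: "length (border_seq r) = card D"
  unfolding border_seq_def by simp

lemma nth_border_seq: "i < card D \<Longrightarrow> border_seq r ! i = (\<phi> ^^ Suc i) r"
  unfolding border_seq_def by (simp del: upt_Suc)

lemma border_seq_rotate1:
  assumes "r \<in> D" shows "border_seq r = rotate1 (map (\<lambda>k. (\<phi> ^^ k) r) [0..<card D])"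
proof -
  have "0 < card D" using card_darts_pos[OF assms] .
  then have "[0..<card D] = 0 # [1..<card D]" "[1..<Suc (card D)] = [1..<card D] @ [card D]"
    by (simp_all add: upt_conv_Cons)
  then show ?thesis unfolding border_seq_def using face_cycle(1)[OF assms] by simp
qed

lemma distinct_border_seq: "r \<in> D \<Longrightarrow> distinct (border_seq r)"
  by (simp add: border_seq_rotate1 distinct_map face_cycle(2))

lemma set_border_seq: "r \<in> D \<Longrightarrow> set (border_seq r) = D"
  by (simp add: border_seq_rotate1 face_cycle(3))

lemma border_seq_snoc:
  assumes "r \<in> D" shows "border_seq r = map (\<lambda>k. (\<phi> ^^ k) r) [1..<card D] @ [r]"
proof -
  have "[1..<Suc (card D)] = [1..<card D] @ [card D]" using card_darts_pos[OF assms] by simp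
  then show ?thesis unfolding border_seq_def using face_cycle(1)[OF assms] by simp
qed

lemma border_seq_funpow:
  assumes "r \<in> D"
  shows "border_seq ((\<phi> ^^ m) r) = rotate m (border_seq r)"
proof (rule nth_equalityI)
  fix i assume "i < length (border_seq ((\<phi> ^^ m) r))"
  then have i: "i < card D" by (simp add: length_border_seq)
  have "rotate m (border_seq r) ! i = (\<phi> ^^ Suc ((m + i) mod card D)) r"
    using i by (simp add: nth_rotate length_border_seq nth_border_seq)
  also have "\<dots> = (\<phi> ^^ Suc (m + i)) r"
    using funpow_mod_eq[OF face_cycle(1)[OF assms]] by simp
  also have "\<dots> = (\<phi> ^^ Suc i) ((\<phi> ^^ m) r)"
    unfolding add.commute[of m i] by (simp add: funpow_add)
  finally show "border_seq ((\<phi> ^^ m) r) ! i = rotate m (border_seq r) ! i"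
    using i by (simp add: nth_border_seq)
qed (simp add: length_border_seq)

definition leaves :: "'a set" where "leaves = {d \<in> D. \<sigma> d = d}"

lemma leaves_subset: "leaves \<subseteq> D"
  unfolding leaves_def by auto

lemma distinct_leaf_seq: "r \<in> D \<Longrightarrow> distinct (leaf_seq D \<alpha> \<sigma> r)"
  unfolding leaf_seq_border_seq using distinct_border_seq by simp

lemma set_leaf_seq: "r \<in> D \<Longrightarrow> set (leaf_seq D \<alpha> \<sigma> r) = leaves"
  unfolding leaf_seq_border_seq leaves_def using set_border_seq by auto

lemma leaf_seq_snoc: "r \<in> leaves \<Longrightarrow> \<exists>L. leaf_seq D \<alpha> \<sigma> r = L @ [r]"
  unfolding leaf_seq_border_seq leaves_def using border_seq_snoc by auto

lemma leaf_seq_conjugate: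
  assumes r: "r \<in> leaves" and x: "x \<in> leaves" "x \<noteq> r"
  obtains A B where "leaf_seq D \<alpha> \<sigma> r = A @ B" "leaf_seq D \<alpha> \<sigma> x = B @ A"
    "A \<noteq> []" "B \<noteq> []" "last A = x"
proof -
  have "r \<in> D" "x \<in> D" using r x unfolding leaves_def by auto
  then obtain m where m: "m < card D" "x = (\<phi> ^^ m) r" using face_cycle(3) by force
  have "m \<noteq> 0" using m(2) \<open>x \<noteq> r\<close> by (metis funpow_0)
  define P where "P d \<longleftrightarrow> \<sigma> d = d" for d
  define A where "A = filter P (take m (border_seq r))"
  define B where "B = filter P (drop m (border_seq r))"
  have AB: "leaf_seq D \<alpha> \<sigma> r = A @ B"
    unfolding leaf_seq_border_seq A_def B_def P_def by (metis append_take_drop_id filter_append)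
  have BA: "leaf_seq D \<alpha> \<sigma> x = B @ A"
    unfolding leaf_seq_border_seq A_def B_def P_def m(2) border_seq_funpow[OF \<open>r \<in> D\<close>]
    using m(1) by (simp add: rotate_drop_take length_border_seq)
  have "take m (border_seq r) = map (\<lambda>k. (\<phi> ^^ k) r) [1..<m] @ [x]"
    unfolding border_seq_def using m \<open>m \<noteq> 0\<close> by (simp add: take_map)
  then have "A = filter P (map (\<lambda>k. (\<phi> ^^ k) r) [1..<m]) @ [x]"
    unfolding A_def using x unfolding P_def leaves_def by simp
  then have "A \<noteq> []" "last A = x" by simp_all
  have "drop m (border_seq r) = drop m (map (\<lambda>k. (\<phi> ^^ k) r) [1..<card D]) @ [r]"
    unfolding border_seq_snoc[OF \<open>r \<in> D\<close>] using m by simp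
  then have "B \<noteq> []" unfolding B_def using r unfolding P_def leaves_def by simp
  show thesis by (rule that[OF AB BA]) fact+
qed

lemma orbit_sigma_self: "d \<in> orbit \<sigma> d"
  using permutation_self_in_orbit[OF permutation_sigma] .

lemma orbit_sigma_eq: "x \<in> orbit \<sigma> d \<Longrightarrow> orbit \<sigma> x = orbit \<sigma> d"
  by (metis orbit_trans orbit_swap orbit_sigma_self subsetI subset_antisym)

lemma orbit_sigma_inner:
  assumes "d \<in> D - leaves" "y \<in> orbit \<sigma> d"
  shows "y \<in> D - leaves"
proof -
  have "y \<in> D" using permutes_orbit_subset[OF sigma_permutes] assms unfolding leaves_def by blast
  moreover have "\<sigma> y \<noteq> y"
  proof
    assume "\<sigma> y = y"
    then have "orbit \<sigma> y = {y}" by (simp add: orbit_eq_singleton_iff)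
    then have "orbit \<sigma> d = {y}" using orbit_sigma_eq[OF assms(2)] by simp
    then show False using assms(1) orbit_sigma_self[of d] \<open>\<sigma> y = y\<close> unfolding leaves_def by auto
  qed
  ultimately show ?thesis unfolding leaves_def by simp
qed

definition inner_vertices :: "'a set set" where
  "inner_vertices = orbit \<sigma> ` (D - leaves)"

lemma finite_inner_vertex: "v \<in> inner_vertices \<Longrightarrow> finite v"
  unfolding inner_vertices_def
  using permutes_orbit_subset[OF sigma_permutes] finite_darts finite_subset by blast

lemma card_map_vertices: "card (map_vertices D \<sigma>) = card leaves + card inner_vertices"
proof -
  have "orbit \<sigma> l = {l}" if "l \<in> leaves" for l
    using that unfolding leaves_def by (simp add: orbit_eq_singleton_iff)
  then have "orbit \<sigma> ` leaves = (\<lambda>l. {l}) ` leaves" by simp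
  moreover have "map_vertices D \<sigma> = orbit \<sigma> ` leaves \<union> inner_vertices"
    unfolding map_vertices_def orbit_of_sigma Setcompr_eq_image inner_vertices_def image_Un[symmetric]
    using leaves_subset by (simp add: Un_absorb1)
  moreover have "{l} \<noteq> orbit \<sigma> d" if "l \<in> leaves" "d \<in> D - leaves" for l d
    using orbit_sigma_self[of d] that by auto
  then have "(\<lambda>l. {l}) ` leaves \<inter> inner_vertices = {}"
    unfolding inner_vertices_def by blast
  moreover have "finite leaves" "finite inner_vertices"
    unfolding leaves_def inner_vertices_def using finite_darts by simp_all
  ultimately show ?thesis by (simp add: card_Un_disjoint card_image)
qed

lemma card_map_edges: "2 * card (map_edges D \<alpha>) = card D"
proof -
  have "\<Union>(map_edges D \<alpha>) = D" unfolding map_edges_def using alpha_in by auto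
  moreover have "2 * card (map_edges D \<alpha>) = card (\<Union>(map_edges D \<alpha>))"
  proof (rule card_partition)
    show "finite (map_edges D \<alpha>)" unfolding map_edges_def using finite_darts by simp
    show "finite (\<Union>(map_edges D \<alpha>))" unfolding map_edges_def using finite_darts by auto
    show "card e = 2" if "e \<in> map_edges D \<alpha>" for e
      using that alpha_neq unfolding map_edges_def by (auto simp: card_2_iff)
    show "e1 \<inter> e2 = {}" if "e1 \<in> map_edges D \<alpha>" "e2 \<in> map_edges D \<alpha>" "e1 \<noteq> e2" for e1 e2
      using that alpha_alpha unfolding map_edges_def by (auto, metis, metis)
  qed
  ultimately show ?thesis by simp
qed

lemma card_inner_darts: "card (D - leaves) = (\<Sum>v\<in>inner_vertices. card v)"
proof -
  have "\<Union>inner_vertices = D - leaves"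
    unfolding inner_vertices_def using orbit_sigma_self orbit_sigma_inner by blast
  moreover have "finite inner_vertices" unfolding inner_vertices_def using finite_darts by simp
  moreover have "v \<inter> w = {}" if "v \<in> inner_vertices" "w \<in> inner_vertices" "v \<noteq> w" for v w
    using that orbit_sigma_eq unfolding inner_vertices_def by blast
  then have "pairwise disjnt inner_vertices" unfolding pairwise_def disjnt_def by blast
  ultimately show ?thesis using card_Union_disjoint finite_inner_vertex by metis
qed

lemma card_leaves_euler: "card leaves + 2 * card inner_vertices = card (D - leaves) + 2"
proof -
  have "card D = card leaves + card (D - leaves)"
    using card_Diff_subset[OF finite_subset[OF leaves_subset finite_darts] leaves_subset]
      card_mono[OF finite_darts leaves_subset] by simp
  then show ?thesis using euler card_map_faces card_map_vertices card_map_edges by linarith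
qed

lemma leaf_edge_darts:
  assumes "l \<in> leaves" "\<alpha> l \<in> leaves" shows "D = {l, \<alpha> l}"
proof -
  have "l \<in> D" using assms(1) unfolding leaves_def by simp
  have phi: "\<phi> l = \<alpha> l" "\<phi> (\<alpha> l) = l"
    using assms alpha_alpha[OF \<open>l \<in> D\<close>] unfolding \<phi>_def leaves_def by auto
  have "y \<in> {l, \<alpha> l}" if "y \<in> orbit \<phi> l" for y
    using that by (induction rule: orbit.induct) (auto simp: phi)
  then show ?thesis using orbit_phi[OF \<open>l \<in> D\<close>] alpha_in[OF \<open>l \<in> D\<close>] \<open>l \<in> D\<close> by blast
qed

section \<open>Leaves of eulerian trees\<close>

definition white_leaves_at :: "('a \<Rightarrow> colour) \<Rightarrow> 'a set \<Rightarrow> 'a set" where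
  "white_leaves_at col v = {l \<in> leaves. col l = White \<and> \<alpha> l \<in> v}"

lemma card_inner_vertex_eulerian:
  assumes eulerian: "eulerian_tree D \<alpha> \<sigma> col r" and v: "v \<in> inner_vertices"
  shows "card v = 2 * card (white_leaves_at col v) + 2"
proof -
  obtain d where d: "d \<in> D - leaves" "v = orbit \<sigma> d"
    using v unfolding inner_vertices_def by blast
  have degree: "even (card v)" "card (white_leaves_at col v) = card v div 2 - 1"
    using eulerian d unfolding eulerian_tree_def orbit_of_sigma white_leaves_at_def leaves_def by auto
  have "{d, \<sigma> d} \<subseteq> v" using d orbit_sigma_self orbit.base by auto
  moreover have "card {d, \<sigma> d} = 2" using d unfolding leaves_def by (auto simp: card_2_iff)
  ultimately have "2 \<le> card v" using card_mono[OF finite_inner_vertex[OF v]] by metis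
  then show ?thesis using degree by auto
qed

lemma card_white_leaves:
  assumes no_leaf_edge: "\<forall>l\<in>leaves. \<alpha> l \<notin> leaves"
  shows "card {l \<in> leaves. col l = White} = (\<Sum>v\<in>inner_vertices. card (white_leaves_at col v))"
proof -
  have "{l \<in> leaves. col l = White} \<subseteq> (\<Union>v\<in>inner_vertices. white_leaves_at col v)"
  proof
    fix l assume l: "l \<in> {l \<in> leaves. col l = White}"
    then have "\<alpha> l \<in> D - leaves" using no_leaf_edge alpha_in leaves_subset by blast
    then show "l \<in> (\<Union>v\<in>inner_vertices. white_leaves_at col v)"
      using l orbit_sigma_self unfolding inner_vertices_def white_leaves_at_def by blast
  qed
  then have "{l \<in> leaves. col l = White} = (\<Union>v\<in>inner_vertices. white_leaves_at col v)"
    unfolding white_leaves_at_def by blast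
  moreover have "white_leaves_at col v \<inter> white_leaves_at col w = {}"
    if "v \<in> inner_vertices" "w \<in> inner_vertices" "v \<noteq> w" for v w
    using that orbit_sigma_eq unfolding inner_vertices_def white_leaves_at_def by blast
  moreover have "finite inner_vertices" unfolding inner_vertices_def using finite_darts by simp
  moreover have "finite (white_leaves_at col v)" for v
    unfolding white_leaves_at_def leaves_def using finite_darts by simp
  ultimately show ?thesis by (simp add: card_UN_disjoint)
qed

lemma card_leaves_eulerian:
  assumes "eulerian_tree D \<alpha> \<sigma> col r" and "\<forall>l\<in>leaves. \<alpha> l \<notin> leaves"
  shows "card leaves = 2 * card {l \<in> leaves. col l = White} + 2"
proof -
  have "card (D - leaves) = (\<Sum>v\<in>inner_vertices. 2 * card (white_leaves_at col v) + 2)"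
    using card_inner_darts card_inner_vertex_eulerian[OF assms(1)] by simp
  also have "\<dots> = 2 * (\<Sum>v\<in>inner_vertices. card (white_leaves_at col v)) + 2 * card inner_vertices"
    by (simp only: sum.distrib sum_distrib_left sum_constant) simp
  finally show ?thesis using card_white_leaves[OF assms(2), of col] card_leaves_euler by linarith
qed

lemma tree_word_height:
  assumes eulerian: "eulerian_tree D \<alpha> \<sigma> col r" and "\<alpha> r \<notin> leaves"
  shows "word_height (tree_word D \<alpha> \<sigma> col r) = -2"
proof -
  have "r \<in> leaves" using eulerian unfolding eulerian_tree_def leaves_def by simp
  have "\<alpha> l \<notin> leaves" if "l \<in> leaves" for l
  proof
    assume "\<alpha> l \<in> leaves"
    have "r \<in> D" using \<open>r \<in> leaves\<close> leaves_subset by blast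
    then have "r = l \<or> r = \<alpha> l" unfolding leaf_edge_darts[OF that \<open>\<alpha> l \<in> leaves\<close>] by simp
    then show False
      using \<open>\<alpha> l \<in> leaves\<close> that \<open>\<alpha> r \<notin> leaves\<close> alpha_alpha leaves_subset by auto
  qed
  then have "card leaves = 2 * card {l \<in> leaves. col l = White} + 2"
    using card_leaves_eulerian[OF eulerian] by blast
  moreover define L where "L = leaf_seq D \<alpha> \<sigma> r"
  have "distinct L" "set L = leaves"
    using distinct_leaf_seq set_leaf_seq \<open>r \<in> leaves\<close> leaves_subset unfolding L_def by auto
  then have "count_list (map col L) White = card {l \<in> leaves. col l = White}"
    "count_list (map col L) Black + count_list (map col L) White = card leaves"
    using count_list_map_distinct[of L col] count_list_colours[of "map col L"] distinct_card[of L]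
    by auto
  ultimately show ?thesis unfolding tree_word_def L_def[symmetric] word_height_def by linarith
qed

section \<open>Balanced conjugates and their closures\<close>

lemma balanced_root_leaf: "balanced_tree D \<alpha> \<sigma> col r \<Longrightarrow> r \<in> leaves"
  unfolding balanced_tree_def eulerian_tree_def leaves_def by simp

lemma balanced_conjugate_split:
  assumes bal_r: "balanced_tree D \<alpha> \<sigma> col r" and "\<alpha> r \<notin> leaves"
    and word: "tree_word D \<alpha> \<sigma> col r = p1 @ [Black] @ p2 @ [Black]"
    and p: "correct_word p1" "correct_word p2"
    and bal_x: "balanced_tree D \<alpha> \<sigma> col x" and "x \<noteq> r"
  obtains A B where "leaf_seq D \<alpha> \<sigma> r = A @ B" "leaf_seq D \<alpha> \<sigma> x = B @ A"
    "map col A = p1 @ [Black]" "map col B = p2 @ [Black]" "last A = x"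
    "word_height p1 = 0" "word_height p2 = 0"
proof -
  obtain A B where AB: "leaf_seq D \<alpha> \<sigma> r = A @ B" "leaf_seq D \<alpha> \<sigma> x = B @ A"
    "A \<noteq> []" "B \<noteq> []" "last A = x"
    using leaf_seq_conjugate[OF balanced_root_leaf[OF bal_r] balanced_root_leaf[OF bal_x] \<open>x \<noteq> r\<close>] .
  obtain q1 q2 where q: "correct_word q1" "correct_word q2"
    "tree_word D \<alpha> \<sigma> col x = q1 @ [Black] @ q2 @ [Black]"
    using bal_x unfolding balanced_tree_def by blast
  have "eulerian_tree D \<alpha> \<sigma> col r" using bal_r unfolding balanced_tree_def by simp
  then have height: "word_height (map col A @ map col B) = -2"
    using tree_word_height[OF _ \<open>\<alpha> r \<notin> leaves\<close>] AB(1) unfolding tree_word_def by simp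
  have "map col A @ map col B = p1 @ [Black] @ p2 @ [Black]"
    "map col B @ map col A = q1 @ [Black] @ q2 @ [Black]"
    using word q(3) AB(1,2) unfolding tree_word_def by simp_all
  then have colours: "map col A = p1 @ [Black] \<and> map col B = p2 @ [Black]"
    using balanced_word_rotation[OF _ _ p q(1,2) height] AB(3,4) by simp
  then have "word_height (p1 @ [Black] @ p2 @ [Black]) = -2" using height by simp
  then have "word_height p1 = 0" "word_height p2 = 0" using balanced_word_factor_heights[OF p] by blast+
  then show thesis using that AB colours by blast
qed

lemma balanced_conjugate_unique:
  assumes bal_r: "balanced_tree D \<alpha> \<sigma> col r" and "\<alpha> r \<notin> leaves"
    and "balanced_tree D \<alpha> \<sigma> col x" "x \<noteq> r" and "balanced_tree D \<alpha> \<sigma> col y" "y \<noteq> r"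
  shows "x = y"
proof -
  obtain p1 p2 where p: "correct_word p1" "correct_word p2"
    and word: "tree_word D \<alpha> \<sigma> col r = p1 @ [Black] @ p2 @ [Black]"
    using bal_r unfolding balanced_tree_def by blast
  have "z = leaf_seq D \<alpha> \<sigma> r ! length p1" if z: "balanced_tree D \<alpha> \<sigma> col z" "z \<noteq> r" for z
  proof -
    obtain A B where AB: "leaf_seq D \<alpha> \<sigma> r = A @ B" "map col A = p1 @ [Black]" "last A = z"
      using balanced_conjugate_split[OF bal_r \<open>\<alpha> r \<notin> leaves\<close> word p z] by metis
    have "length A = Suc (length p1)" using arg_cong[OF AB(2), of length] by simp
    then have "A ! length p1 = z" using AB(3) last_conv_nth[of A] by force
    then show ?thesis using AB(1) \<open>length A = Suc (length p1)\<close> by (simp add: nth_append)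
  qed
  then show ?thesis using assms by metis
qed

lemma leaves_matched_conjugate:
  assumes bal_r: "balanced_tree D \<alpha> \<sigma> col r" and "\<alpha> r \<notin> leaves"
    and bal_r': "balanced_tree D \<alpha> \<sigma> col r'" and "r' \<noteq> r"
  shows "leaves_matched D \<alpha> \<sigma> col r' = leaves_matched D \<alpha> \<sigma> col r"
proof -
  obtain p1 p2 where p: "correct_word p1" "correct_word p2"
    and word: "tree_word D \<alpha> \<sigma> col r = p1 @ [Black] @ p2 @ [Black]"
    using bal_r unfolding balanced_tree_def by blast
  obtain A B where AB: "leaf_seq D \<alpha> \<sigma> r = A @ B" "leaf_seq D \<alpha> \<sigma> r' = B @ A"
    and colours: "map col A = p1 @ [Black]" "map col B = p2 @ [Black]"
    and "word_height p1 = 0" "word_height p2 = 0"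
    using balanced_conjugate_split[OF bal_r \<open>\<alpha> r \<notin> leaves\<close> word p bal_r' \<open>r' \<noteq> r\<close>] by metis
  then show ?thesis
    unfolding leaves_matched_eq_list_matched AB
    using list_matched_closed_append[OF colours(1) p(1) \<open>word_height p1 = 0\<close>]
      list_matched_closed_append[OF colours(2) p(2) \<open>word_height p2 = 0\<close>]
    by (auto simp: fun_eq_iff)
qed

lemma closure_mate_conjugate:
  assumes "balanced_tree D \<alpha> \<sigma> col r" "\<alpha> r \<notin> leaves" "balanced_tree D \<alpha> \<sigma> col r'" "r' \<noteq> r"
  shows "closure_mate D \<alpha> \<sigma> col r' = closure_mate D \<alpha> \<sigma> col r"
  unfolding closure_mate_def leaves_matched_conjugate[OF assms] ..

lemma closure_mate_root:
  assumes bal_r: "balanced_tree D \<alpha> \<sigma> col r" and "\<alpha> r \<notin> leaves"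
    and bal_r': "balanced_tree D \<alpha> \<sigma> col r'" and "r' \<noteq> r"
  shows "closure_mate D \<alpha> \<sigma> col r r = r'"
proof -
  obtain p1 p2 where p: "correct_word p1" "correct_word p2"
    and word: "tree_word D \<alpha> \<sigma> col r = p1 @ [Black] @ p2 @ [Black]"
    using bal_r unfolding balanced_tree_def by blast
  obtain A B where AB: "leaf_seq D \<alpha> \<sigma> r = A @ B"
    and colours: "map col A = p1 @ [Black]" "map col B = p2 @ [Black]"
    and "word_height p1 = 0" "word_height p2 = 0"
    using balanced_conjugate_split[OF bal_r \<open>\<alpha> r \<notin> leaves\<close> word p bal_r' \<open>r' \<noteq> r\<close>] by metis
  have "r \<in> leaves" by (rule balanced_root_leaf[OF bal_r])
  then have "distinct (A @ B)" "\<exists>L. A @ B = L @ [r]"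
    using distinct_leaf_seq[of r] leaf_seq_snoc[of r] leaves_subset unfolding AB by auto
  moreover have "B \<noteq> []" using colours(2) by auto
  ultimately obtain B0 where "B = B0 @ [r]"
    by (metis append_butlast_last_id last_appendR last_snoc)
  then have "r \<notin> set A" "r \<notin> set (butlast B)" using \<open>distinct (A @ B)\<close> by auto
  txt \<open>The root is the closing b of the block p2 b and is matched with nothing, so
    closure_mate takes its free-leaf branch.\<close>
  then have "\<not> list_matched col (A @ B) r l \<and> \<not> list_matched col (A @ B) l r" for l
    using list_matched_closed_append[OF colours(1) p(1) \<open>word_height p1 = 0\<close>]
      list_matched_closed_in_butlast[OF colours(1) p(1) \<open>word_height p1 = 0\<close>]
      list_matched_closed_in_butlast[OF colours(2) p(2) \<open>word_height p2 = 0\<close>]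
    by (meson in_set_butlastD)
  then have "closure_mate D \<alpha> \<sigma> col r r = (THE l. l \<noteq> r \<and> balanced_tree D \<alpha> \<sigma> col l)"
    unfolding closure_mate_def leaves_matched_eq_list_matched AB by simp
  also have "\<dots> = r'"
    using balanced_conjugate_unique[OF bal_r \<open>\<alpha> r \<notin> leaves\<close>] bal_r' \<open>r' \<noteq> r\<close> by blast
  finally show ?thesis .
qed

end

theorem mainTheorem4:
  fixes D :: "'a set" and \<alpha> \<sigma> :: "'a \<Rightarrow> 'a" and col :: "'a \<Rightarrow> colour" and r r' :: 'a
  assumes "balanced_tree D \<alpha> \<sigma> col r"
      and "balanced_tree D \<alpha> \<sigma> col r'"
      and "r' \<noteq> r"
  shows "eul_closure D \<alpha> \<sigma> col r' = reverse_root (eul_closure D \<alpha> \<sigma> col r)"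
proof -
  interpret plane_tree_map D \<alpha> \<sigma>
    using assms(1) unfolding balanced_tree_def eulerian_tree_def by unfold_locales blast
  have r: "r \<in> leaves" "r \<in> D" using balanced_root_leaf[OF assms(1)] leaves_subset by auto
  show ?thesis
  proof (cases "\<alpha> r \<in> leaves")
    case True
    then have "D = {r, \<alpha> r}" by (rule leaf_edge_darts[OF r(1)])
    moreover have "r' \<in> D" using balanced_root_leaf[OF assms(2)] leaves_subset by auto
    ultimately have "r' = \<alpha> r" "\<forall>d\<in>D. \<sigma> d = d" using assms(3) r(1) True unfolding leaves_def by auto
    then have no_inner_dart: "(d \<in> D \<and> \<sigma> d \<noteq> d \<and> P) = False" for d P by auto
    show ?thesis unfolding eul_closure_def reverse_root_def
      using \<open>r' = \<alpha> r\<close> alpha_alpha[OF r(2)] by (simp add: no_inner_dart)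
  next
    case False
    then have "\<alpha> r \<in> D" "\<sigma> (\<alpha> r) \<noteq> \<alpha> r" "\<sigma> (\<alpha> (\<alpha> r)) = \<alpha> (\<alpha> r)"
      using alpha_in[OF r(2)] alpha_alpha[OF r(2)] r(1) unfolding leaves_def by auto
    then show ?thesis
      unfolding eul_closure_def reverse_root_def closure_mate_conjugate[OF assms(1) False assms(2,3)]
      using alpha_alpha[OF r(2)] closure_mate_root[OF assms(1) False assms(2,3)] by simp
  qed
qed

end
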